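(* There is a universal constant $c>0$ such that the following holds. For any integers $k\ge 1$, $n\ge 2$ and any reals $G,\lambda>0$ with $G\ge 6\lambda$, there exist functions $f_1,\dots,f_n$ on $\mathbb{R}$ and an initialization point $x_0$ satisfying Assumption (A) with parameters $n,\lambda,G$, such that for every step size $\eta>0$, the iterate $x_k$ produced by the incremental gradient method after $k$ epochs satisfies \[ F(x_k)-\inf_x F(x)\;\ge\; c\cdot\min\left\{\lambda,\ \frac{G^2}{\lambda k^2}\right\}. \]
   Context: Assumption (A) (parameters $n\ge 2$, $\lambda>0$, $G>0$, on $\mathbb{R}^d$): $F(x)=\frac1n\sum_{i=1}^n f_i(x)$, where each $f_i:\mathbb{R}^d\to\mathbb{R}$ is a convex quadratic function $f_i(x)=x^\top A_ix+b_i^\top x$ (with $A_i$ symmetric positive semidefinite); $F$ is $\lambda$-strongly convex with unique minimizer $x^*$; each $\nabla f_i$ is $L$-Lipschitz for some $L\le 3\lambda$; each $f_i$ satisfies $\|\nabla f_i(x)\|\le G$ for all $x$ with $\|x-x^*\|\le 1$; and the initialization satisfies $\|x_0-x^*\|\le 1$. The incremental gradient method with constant step size $\eta>0$ starts at $x_0$ and runs $k$ epochs; each epoch performs the $n$ updates $x\leftarrow x-\eta\nabla f_j(x)$ for $j=1,2,\dots,n$ in this fixed order; $x_t$ denotes the iterate at the end of epoch $t$. *)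

theory Defs
  imports "HOL-Analysis.Analysis"
begin

text \<open>One-dimensional setting (d = 1). Component functions are indexed f 1, ..., f n.\<close>

text \<open>Convex quadratic on R: x^T A x + b^T x with A symmetric PSD, i.e. a x^2 + b x with a \<ge> 0.\<close>
definition convex_quadratic :: "(real \<Rightarrow> real) \<Rightarrow> bool" where
  "convex_quadratic g \<longleftrightarrow> (\<exists>a b. 0 \<le> a \<and> g = (\<lambda>x. a * x\<^sup>2 + b * x))"

definition strongly_convex_on :: "real set \<Rightarrow> (real \<Rightarrow> real) \<Rightarrow> real \<Rightarrow> bool" where
  "strongly_convex_on S g \<mu> \<longleftrightarrow> convex S \<and>
     (\<forall>x\<in>S. \<forall>y\<in>S. \<forall>t::real. 0 \<le> t \<and> t \<le> 1 \<longrightarrow>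
        g (t * x + (1 - t) * y) \<le> t * g x + (1 - t) * g y - \<mu> / 2 * t * (1 - t) * (x - y)\<^sup>2)"

definition avg_fun :: "nat \<Rightarrow> (nat \<Rightarrow> real \<Rightarrow> real) \<Rightarrow> real \<Rightarrow> real" where
  "avg_fun n f = (\<lambda>x. (1 / real n) * (\<Sum>i=1..n. f i x))"

definition assumption_A :: "nat \<Rightarrow> real \<Rightarrow> real \<Rightarrow> (nat \<Rightarrow> real \<Rightarrow> real) \<Rightarrow> real \<Rightarrow> bool" where
  "assumption_A n lam G f x0 \<longleftrightarrow>
     2 \<le> n \<and> 0 < lam \<and> 0 < G \<and>
     (\<forall>i\<in>{1..n}. convex_quadratic (f i)) \<and>
     strongly_convex_on UNIV (avg_fun n f) lam \<and>
     (\<exists>L. L \<le> 3 * lam \<and> (\<forall>i\<in>{1..n}. L-lipschitz_on UNIV (deriv (f i)))) \<and>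
     (\<exists>xs. (\<forall>y. avg_fun n f xs \<le> avg_fun n f y) \<and>
           (\<forall>z. (\<forall>y. avg_fun n f z \<le> avg_fun n f y) \<longrightarrow> z = xs) \<and>
           (\<forall>i\<in>{1..n}. \<forall>x. \<bar>x - xs\<bar> \<le> 1 \<longrightarrow> \<bar>deriv (f i) x\<bar> \<le> G) \<and>
           \<bar>x0 - xs\<bar> \<le> 1)"

definition ig_epoch :: "nat \<Rightarrow> (nat \<Rightarrow> real \<Rightarrow> real) \<Rightarrow> real \<Rightarrow> real \<Rightarrow> real" where
  "ig_epoch n f \<eta> x = fold (\<lambda>j y. y - \<eta> * deriv (f j) y) [1..<n+1] x"

definition ig_iterate :: "nat \<Rightarrow> (nat \<Rightarrow> real \<Rightarrow> real) \<Rightarrow> real \<Rightarrow> real \<Rightarrow> nat \<Rightarrow> real" where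
  "ig_iterate n f \<eta> x0 k = (ig_epoch n f \<eta> ^^ k) x0"

end

theory Submission
  imports Defs
begin

text \<open>
  Take \<open>h\<close> odd with \<open>2h \<le> n \<le> 6h\<close>, let the first \<open>h\<close> components be
  \<open>3\<lambda>/2 x\<^sup>2 + G/2 x\<close>, the next \<open>h\<close> be \<open>3\<lambda>/2 x\<^sup>2 - G/2 x\<close> and the rest zero, and start at
  \<open>x\<^sub>0 = 1\<close>. Then \<open>F = A x\<^sup>2\<close> with \<open>A \<ge> \<lambda>/2\<close>, and with \<open>v = (1 - 3\<eta>\<lambda>)\<^sup>h\<close> one epoch is the
  affine map \<open>x \<mapsto> v\<^sup>2 x + G (1 - v)\<^sup>2 / (6\<lambda>)\<close>: the two blocks of linear terms cancel in
  \<open>F\<close> but not along the trajectory. Either the contraction \<open>v\<^sup>2\<close> is so weak that after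
  \<open>k\<close> epochs the iterate is still at least \<open>1/2\<close>, or, by Bernoulli's inequality,
  \<open>1 - v \<ge> 1/(5k)\<close>, so the fixed point, and hence the iterate, is of order \<open>G/(\<lambda>k)\<close>.
\<close>

lemma fold_affine:
  fixes r d x :: real
  assumes "\<forall>j\<in>set xs. \<forall>y. g j y = r * y + d"
  shows "fold g xs x = r ^ length xs * x + d * (\<Sum>i<length xs. r ^ i)"
  using assms
proof (induction xs arbitrary: x)
  case Nil then show ?case by simp
next
  case (Cons a xs)
  have "fold g (a # xs) x = fold g xs (r * x + d)" using Cons.prems by simp
  also have "\<dots> = r ^ length xs * (r * x + d) + d * (\<Sum>i<length xs. r ^ i)" using Cons by simp
  also have "\<dots> = r ^ length (a # xs) * x + d * (\<Sum>i<length (a # xs). r ^ i)"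
    by (simp add: algebra_simps)
  finally show ?case .
qed

lemma deriv_quadratic: "deriv (\<lambda>x. a * x\<^sup>2 + b * x) y = 2 * a * y + (b::real)"
  by (rule DERIV_imp_deriv) (auto intro!: derivative_eq_intros)

lemma INF_quadratic: "(0::real) \<le> A \<Longrightarrow> (INF x. A * x\<^sup>2) = 0"
proof (rule antisym)
  assume A: "0 \<le> A"
  have "bdd_below (range (\<lambda>x. A * x\<^sup>2))"
    using A by (auto simp: bdd_below_def intro!: exI[of _ 0])
  then have "(INF x. A * x\<^sup>2) \<le> A * 0\<^sup>2" by (rule cINF_lower) simp
  then show "(INF x. A * x\<^sup>2) \<le> 0" by simp
  show "0 \<le> (INF x. A * x\<^sup>2)" by (rule cINF_greatest) (use A in auto)
qed

lemma sum_if_le: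
  assumes "m \<le> n"
  shows "(\<Sum>i=1..n. if i \<le> m then c else 0) = real m * (c::real)"
proof -
  have "(\<Sum>i=1..n. if i \<le> m then c else 0) = (\<Sum>i\<in>{i\<in>{1..n}. i \<le> m}. c)"
    by (rule sum.inter_filter[symmetric]) simp
  also have "{i\<in>{1..n}. i \<le> m} = {1..m}" using assms by auto
  finally show ?thesis by simp
qed

lemma funpow_affine_ge:
  fixes P Q x :: real
  assumes "0 \<le> P" "0 \<le> Q" "0 \<le> x" "1 \<le> k"
  shows "Q \<le> ((\<lambda>x. P * x + Q) ^^ k) x"
proof -
  have nonneg: "0 \<le> ((\<lambda>x. P * x + Q) ^^ j) x" for j
    using assms by (induction j) auto
  obtain j where "k = Suc j" using assms(4) by (cases k) auto
  then show ?thesis using nonneg[of j] assms by simp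
qed

lemma funpow_affine_eq:
  fixes P Q x :: real
  assumes "P \<noteq> 1"
  shows "((\<lambda>x. P * x + Q) ^^ k) x = Q / (1 - P) + P ^ k * (x - Q / (1 - P))"
proof (induction k)
  case 0 then show ?case by simp
next
  case (Suc k)
  define xb where "xb = Q / (1 - P)"
  have "Q = xb * (1 - P)" using assms by (simp add: xb_def)
  then have "P * (xb + P ^ k * (x - xb)) + Q = xb + P ^ Suc k * (x - xb)"
    by (simp add: algebra_simps)
  then show ?case using Suc by (simp add: xb_def)
qed

text \<open>Bernoulli's inequality gives \<open>4khu > 1\<close>, while
  \<open>(1 - u)\<^sup>h (1 + hu) \<le> (1 - u\<^sup>2)\<^sup>h \<le> 1\<close>.\<close>

lemma one_minus_power_ge:
  fixes u :: real
  assumes "0 \<le> u" "u \<le> 1" "1 \<le> k" "(1 - u) ^ (2 * h * k) < 1/2"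
  shows "1 / (5 * real k) \<le> 1 - (1 - u) ^ h"
proof -
  define t where "t = real h * u"
  have "1 + real (2 * h * k) * (- u) \<le> (1 + (- u)) ^ (2 * h * k)"
    by (rule Bernoulli_inequality) (use assms(2) in simp)
  with assms(4) have t_large: "1 < 4 * real k * t" by (simp add: t_def algebra_simps)
  have "(1 - u) ^ h * (1 + t) \<le> (1 - u) ^ h * (1 + u) ^ h"
    using Bernoulli_inequality[of u h] assms(1,2) by (intro mult_left_mono) (auto simp: t_def)
  also have "\<dots> = (1 - u\<^sup>2) ^ h"
    by (simp add: power_mult_distrib[symmetric] power2_eq_square algebra_simps)
  also have "\<dots> \<le> 1" using assms(1,2) by (intro power_le_one) (auto simp: power_le_one)
  finally have v_bound: "(1 - u) ^ h * (1 + t) \<le> 1" .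
  have t0: "0 \<le> t" using assms(1) by (simp add: t_def)
  have "t \<le> real k * t" using t0 assms(3) mult_right_mono[of 1 "real k" t] by simp
  then have "1 + t \<le> 5 * real k * t" using t_large by linarith
  then have "1 / (5 * real k) \<le> t / (1 + t)" using t0 assms(3) by (simp add: field_simps)
  also have "t / (1 + t) \<le> 1 - (1 - u) ^ h" using v_bound t0 by (simp add: field_simps)
  finally show ?thesis .
qed

lemma funpow_epoch_map_lower_bound:
  fixes u G lam :: real
  assumes "0 < u" "0 < lam" "6 * lam \<le> G" "odd h" "1 \<le> k"
  defines "v \<equiv> (1 - u) ^ h"
  shows "1/2 \<le> ((\<lambda>x. v\<^sup>2 * x + G * (1 - v)\<^sup>2 / (6 * lam)) ^^ k) 1 \<or>
         G / (120 * lam * real k) \<le> ((\<lambda>x. v\<^sup>2 * x + G * (1 - v)\<^sup>2 / (6 * lam)) ^^ k) 1"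
    (is "_ \<le> ?x \<or> _ \<le> ?x")
proof (cases "v \<le> 0")
  case True
  have "1 * 1 \<le> (1 - v) * (1 - v)" using True by (intro mult_mono) auto
  then have "G / (6 * lam) * 1 \<le> G / (6 * lam) * (1 - v)\<^sup>2"
    using assms(2,3) by (intro mult_left_mono) (auto simp: power2_eq_square)
  moreover have "1 \<le> G / (6 * lam)" using assms(2,3) by simp
  ultimately have "1 \<le> G * (1 - v)\<^sup>2 / (6 * lam)" by simp
  also have "\<dots> \<le> ?x" using assms by (intro funpow_affine_ge) auto
  finally show ?thesis by simp
next
  case False
  have r0: "0 < 1 - u" using False assms(4) unfolding v_def
    by (auto simp: zero_less_power_eq not_le)
  have v0: "0 < v" using False by simp
  have v1: "v < 1" unfolding v_def using r0 assms(1,4) by (simp add: power_less_one_iff odd_pos)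
  define xb where "xb = G * (1 - v) / (6 * lam * (1 + v))"
  have P1: "v\<^sup>2 < 1" using v0 v1 by (simp add: power_less_one_iff)
  have "?x = xb + (v\<^sup>2) ^ k * (1 - xb)"
  proof -
    have "1 - v\<^sup>2 = (1 - v) * (1 + v)" by (simp add: power2_eq_square algebra_simps)
    then have "G * (1 - v)\<^sup>2 / (6 * lam) / (1 - v\<^sup>2)
        = ((1 - v) * (G * (1 - v))) / ((1 - v) * (6 * lam * (1 + v)))"
      by (simp add: power2_eq_square ac_simps)
    also have "\<dots> = xb" using v1 by (simp add: xb_def)
    finally have "G * (1 - v)\<^sup>2 / (6 * lam) / (1 - v\<^sup>2) = xb" .
    then show ?thesis using funpow_affine_eq[of "v\<^sup>2"] P1 by simp
  qed
  then have x_eq: "?x = (v\<^sup>2) ^ k + (1 - (v\<^sup>2) ^ k) * xb" by (simp add: algebra_simps)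
  have Pk: "0 \<le> (v\<^sup>2) ^ k" "(v\<^sup>2) ^ k \<le> 1" using P1 by (auto intro: power_le_one)
  have xb_ge: "G * (1 - v) / (12 * lam) \<le> xb"
    unfolding xb_def using v0 v1 assms(2,3) by (intro divide_left_mono) auto
  have xb0: "0 \<le> xb"
    unfolding xb_def using v0 v1 assms(2,3) by (intro divide_nonneg_pos mult_pos_pos) auto
  show ?thesis
  proof (cases "1/2 \<le> (v\<^sup>2) ^ k")
    case True
    moreover have "0 \<le> (1 - (v\<^sup>2) ^ k) * xb" using Pk xb0 by simp
    ultimately show ?thesis using x_eq by linarith
  next
    case False
    then have "(1 - u) ^ (2 * h * k) < 1/2"
      by (simp add: v_def power_mult[symmetric] ac_simps)
    with assms(1,5) r0 have gap: "1 / (5 * real k) \<le> 1 - v"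
      unfolding v_def by (intro one_minus_power_ge) auto
    have "G / (60 * lam * real k) = G / (12 * lam) * (1 / (5 * real k))" by simp
    also have "\<dots> \<le> G / (12 * lam) * (1 - v)" using gap assms(2,3) by (intro mult_left_mono) auto
    also have "\<dots> \<le> xb" using xb_ge by simp
    finally have "G / (60 * lam * real k) \<le> xb" .
    moreover have "xb * (1/2) \<le> xb * (1 - (v\<^sup>2) ^ k)"
      using False xb0 by (intro mult_left_mono) auto
    moreover have "?x = (v\<^sup>2) ^ k + xb * (1 - (v\<^sup>2) ^ k)" using x_eq by (simp add: mult.commute)
    moreover have "G / (120 * lam * real k) = G / (60 * lam * real k) / 2" by simp
    ultimately show ?thesis using Pk(1) by linarith
  qed
qed

lemma quadratic_gap_ge:
  fixes A x G lam :: real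
  assumes "0 < lam" "lam / 2 \<le> A" "1 \<le> k"
    and "1/2 \<le> x \<or> G / (120 * lam * real k) \<le> x" "0 < G"
  shows "1/28800 * min lam (G\<^sup>2 / (lam * (real k)\<^sup>2)) \<le> A * x\<^sup>2"
  using assms(4)
proof
  assume "1/2 \<le> x"
  then have "(1/2)\<^sup>2 \<le> x\<^sup>2" by (intro power_mono) auto
  then have "lam / 2 * (1/4) \<le> A * x\<^sup>2"
    using assms(1,2) by (intro mult_mono) (auto simp: power2_eq_square)
  moreover have "1/28800 * min lam (G\<^sup>2 / (lam * (real k)\<^sup>2)) \<le> 1/28800 * lam" by simp
  ultimately show ?thesis using assms(1) by linarith
next
  assume "G / (120 * lam * real k) \<le> x"
  then have "(G / (120 * lam * real k))\<^sup>2 \<le> x\<^sup>2"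
    using assms by (intro power_mono) auto
  then have "lam / 2 * (G / (120 * lam * real k))\<^sup>2 \<le> A * x\<^sup>2"
    using assms(1,2) by (intro mult_mono) auto
  moreover have "lam / 2 * (G / (120 * lam * real k))\<^sup>2 = 1/28800 * (G\<^sup>2 / (lam * (real k)\<^sup>2))"
    using assms(1,3) by (simp add: field_simps power2_eq_square)
  moreover have "1/28800 * min lam (G\<^sup>2 / (lam * (real k)\<^sup>2)) \<le> 1/28800 * (G\<^sup>2 / (lam * (real k)\<^sup>2))"
    by simp
  ultimately show ?thesis by linarith
qed

definition hard_curvature :: "nat \<Rightarrow> real \<Rightarrow> nat \<Rightarrow> real" where
  "hard_curvature h lam i = (if i \<le> 2 * h then 3 * lam / 2 else 0)"

definition hard_slope :: "nat \<Rightarrow> real \<Rightarrow> nat \<Rightarrow> real" where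
  "hard_slope h G i = (if i \<le> h then G / 2 else if i \<le> 2 * h then - G / 2 else 0)"

definition hard_instance :: "nat \<Rightarrow> real \<Rightarrow> real \<Rightarrow> nat \<Rightarrow> real \<Rightarrow> real" where
  "hard_instance h lam G i = (\<lambda>x. hard_curvature h lam i * x\<^sup>2 + hard_slope h G i * x)"

lemma deriv_hard_instance:
  "deriv (hard_instance h lam G i) y = 2 * hard_curvature h lam i * y + hard_slope h G i"
  unfolding hard_instance_def by (rule deriv_quadratic)

lemma avg_fun_hard_instance:
  assumes "2 * h \<le> n"
  shows "avg_fun n (hard_instance h lam G) = (\<lambda>x. 3 * lam * h / n * x\<^sup>2)"
proof
  fix x
  have slope: "hard_slope h G i = (if i \<le> h then G else 0) + (if i \<le> 2 * h then - G / 2 else 0)" for i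
    by (simp add: hard_slope_def)
  have "(\<Sum>i=1..n. hard_curvature h lam i) = real (2 * h) * (3 * lam / 2)"
    unfolding hard_curvature_def using assms by (rule sum_if_le)
  moreover have "(\<Sum>i=1..n. hard_slope h G i) = 0"
    using sum_if_le[of h n G] sum_if_le[of "2 * h" n "- G / 2"] assms
    unfolding slope sum.distrib by simp
  moreover have "(\<Sum>i=1..n. hard_instance h lam G i x) =
      x\<^sup>2 * (\<Sum>i=1..n. hard_curvature h lam i) + x * (\<Sum>i=1..n. hard_slope h G i)"
    by (simp add: hard_instance_def sum.distrib sum_distrib_left algebra_simps)
  ultimately show "avg_fun n (hard_instance h lam G) x = 3 * lam * h / n * x\<^sup>2"
    by (simp add: avg_fun_def)
qed

lemma avg_curvature_ge:
  fixes lam :: real and n h :: nat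
  assumes "0 < lam" "0 < n" "n \<le> 6 * h"
  shows "lam / 2 \<le> 3 * lam * h / n"
  using assms mult_left_mono[of "real n" "6 * real h" lam] by (simp add: field_simps)

lemma assumption_A_hard_instance:
  assumes "2 \<le> n" "0 < lam" "6 * lam \<le> G" "2 * h \<le> n" "n \<le> 6 * h"
  shows "assumption_A n lam G (hard_instance h lam G) 1"
proof -
  define A where "A = 3 * lam * h / n"
  have F: "avg_fun n (hard_instance h lam G) = (\<lambda>x. A * x\<^sup>2)"
    unfolding A_def using assms(4) by (rule avg_fun_hard_instance)
  have A_ge: "lam / 2 \<le> A" unfolding A_def using assms(1,2,5) by (intro avg_curvature_ge) auto
  have curv: "\<bar>2 * hard_curvature h lam i\<bar> \<le> 3 * lam" for i
    using assms(2) by (simp add: hard_curvature_def)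
  have "convex_quadratic (hard_instance h lam G i)" for i
    unfolding convex_quadratic_def hard_instance_def
    by (intro exI[of _ "hard_curvature h lam i"] exI[of _ "hard_slope h G i"])
      (use assms(2) in \<open>simp add: hard_curvature_def\<close>)
  moreover have "strongly_convex_on UNIV (avg_fun n (hard_instance h lam G)) lam"
    unfolding strongly_convex_on_def F
  proof (intro conjI ballI allI impI convex_UNIV)
    fix x y t :: real
    assume "0 \<le> t \<and> t \<le> 1"
    then have "0 \<le> (A - lam / 2) * (t * (1 - t)) * (x - y)\<^sup>2" using A_ge by simp
    moreover have "t * (A * x\<^sup>2) + (1 - t) * (A * y\<^sup>2) - lam / 2 * t * (1 - t) * (x - y)\<^sup>2
        - A * (t * x + (1 - t) * y)\<^sup>2 = (A - lam / 2) * (t * (1 - t)) * (x - y)\<^sup>2"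
      by (simp add: power2_eq_square algebra_simps)
    ultimately show "A * (t * x + (1 - t) * y)\<^sup>2
        \<le> t * (A * x\<^sup>2) + (1 - t) * (A * y\<^sup>2) - lam / 2 * t * (1 - t) * (x - y)\<^sup>2"
      by linarith
  qed
  moreover have "(3 * lam)-lipschitz_on UNIV (deriv (hard_instance h lam G i))" for i
    unfolding lipschitz_on_def deriv_hard_instance
  proof (intro conjI ballI)
    fix x y :: real
    have "dist (2 * hard_curvature h lam i * x + hard_slope h G i)
               (2 * hard_curvature h lam i * y + hard_slope h G i)
          = \<bar>2 * hard_curvature h lam i\<bar> * dist x y"
      by (simp add: dist_real_def abs_mult[symmetric] algebra_simps)
    also have "\<dots> \<le> 3 * lam * dist x y" using curv by (simp add: mult_right_mono)
    finally show "dist (2 * hard_curvature h lam i * x + hard_slope h G i)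
               (2 * hard_curvature h lam i * y + hard_slope h G i) \<le> 3 * lam * dist x y" .
  qed (use assms(2) in simp)
  moreover have "\<bar>deriv (hard_instance h lam G i) x\<bar> \<le> G" if "\<bar>x\<bar> \<le> 1" for i x
  proof -
    have "\<bar>2 * hard_curvature h lam i * x\<bar> \<le> 3 * lam * 1"
      unfolding abs_mult[of _ x] using curv that assms(2) by (intro mult_mono) auto
    moreover have "\<bar>hard_slope h G i\<bar> \<le> G / 2" using assms(2,3) by (simp add: hard_slope_def)
    ultimately show ?thesis unfolding deriv_hard_instance using assms(3) by linarith
  qed
  moreover have "z = 0" if "\<forall>y. A * z\<^sup>2 \<le> A * y\<^sup>2" for z
    using that[rule_format, of 0] A_ge assms(2) by (simp add: mult_le_0_iff)
  ultimately show ?thesis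
    unfolding assumption_A_def using assms(1,2,3) A_ge F
    by (intro conjI exI[of _ "3 * lam"] exI[of _ 0]) auto
qed

lemma ig_epoch_hard_instance:
  fixes \<eta> :: real
  assumes "2 * h \<le> n" "lam \<noteq> 0"
  defines "v \<equiv> (1 - 3 * \<eta> * lam) ^ h"
  shows "ig_epoch n (hard_instance h lam G) \<eta> = (\<lambda>x. v\<^sup>2 * x + G * (1 - v)\<^sup>2 / (6 * lam))"
proof
  fix x
  define r where "r = 1 - 3 * \<eta> * lam"
  define T where "T = (\<Sum>i<h. r ^ i)"
  let ?g = "\<lambda>j y. y - \<eta> * deriv (hard_instance h lam G j) y"
  have up: "fold ?g [1..<h+1] y = v * y - \<eta> * G / 2 * T" for y
    using fold_affine[of "[1..<h+1]" ?g r "- (\<eta> * G / 2)"]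
    by (auto simp: deriv_hard_instance hard_curvature_def hard_slope_def r_def v_def T_def
        algebra_simps simp del: upt_Suc)
  have down: "fold ?g [h+1..<2*h+1] y = v * y + \<eta> * G / 2 * T" for y
    using fold_affine[of "[h+1..<2*h+1]" ?g r "\<eta> * G / 2"]
    by (auto simp: deriv_hard_instance hard_curvature_def hard_slope_def r_def v_def T_def
        algebra_simps simp del: upt_Suc)
  have idle: "fold ?g [2*h+1..<n+1] y = y" for y
    using fold_affine[of "[2*h+1..<n+1]" ?g 1 0]
    by (auto simp: deriv_hard_instance hard_curvature_def hard_slope_def simp del: upt_Suc)
  have blocks: "[1..<n+1] = [1..<h+1] @ [h+1..<2*h+1] @ [2*h+1..<n+1]"
    using assms(1) upt_add_eq_append[of 1 "h+1" "n-h"] upt_add_eq_append[of "h+1" "2*h+1" "n-2*h"]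
    by simp
  have geometric: "3 * \<eta> * lam * T = 1 - v"
    using one_diff_power_eq[of r h] by (simp add: T_def v_def r_def)
  have "ig_epoch n (hard_instance h lam G) \<eta> x = v * (v * x - \<eta> * G / 2 * T) + \<eta> * G / 2 * T"
    by (simp only: ig_epoch_def blocks fold_append o_apply up down idle)
  also have "\<dots> = v\<^sup>2 * x + G * (3 * \<eta> * lam * T) * (1 - v) / (6 * lam)"
    using assms(2) by (simp add: power2_eq_square field_simps)
  finally show "ig_epoch n (hard_instance h lam G) \<eta> x = v\<^sup>2 * x + G * (1 - v)\<^sup>2 / (6 * lam)"
    by (simp add: geometric power2_eq_square)
qed

theorem theorem3:
  shows "\<exists>c::real. c > 0 \<and>
    (\<forall>(k::nat) (n::nat) (G::real) (lam::real).
       1 \<le> k \<longrightarrow> 2 \<le> n \<longrightarrow> 0 < G \<longrightarrow> 0 < lam \<longrightarrow> 6 * lam \<le> G \<longrightarrow>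
       (\<exists>(f::nat \<Rightarrow> real \<Rightarrow> real) (x0::real).
          assumption_A n lam G f x0 \<and>
          (\<forall>\<eta>::real. 0 < \<eta> \<longrightarrow>
             avg_fun n f (ig_iterate n f \<eta> x0 k) - (INF x. avg_fun n f x)
               \<ge> c * min lam (G\<^sup>2 / (lam * (real k)\<^sup>2)))))"
proof (intro exI[of _ "1/28800"] conjI allI impI)
  fix k n :: nat and G lam :: real
  assume k: "1 \<le> k" and n: "2 \<le> n" and G: "0 < G" and lam: "0 < lam" and G_ge: "6 * lam \<le> G"
  define h where "h = 2 * (n div 6) + 1"
  have h: "2 * h \<le> n" "n \<le> 6 * h" "odd h" unfolding h_def using n by presburger+
  define f where "f = hard_instance h lam G"
  define A where "A = 3 * lam * h / n"
  have F: "avg_fun n f = (\<lambda>x. A * x\<^sup>2)"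
    unfolding f_def A_def using h(1) by (rule avg_fun_hard_instance)
  have A_ge: "lam / 2 \<le> A" unfolding A_def using n lam h(2) by (intro avg_curvature_ge) auto
  show "\<exists>f x0. assumption_A n lam G f x0 \<and> (\<forall>\<eta>. 0 < \<eta> \<longrightarrow>
      1/28800 * min lam (G\<^sup>2 / (lam * (real k)\<^sup>2))
        \<le> avg_fun n f (ig_iterate n f \<eta> x0 k) - (INF x. avg_fun n f x))"
  proof (intro exI[of _ f] exI[of _ 1] conjI allI impI)
    show "assumption_A n lam G f 1"
      unfolding f_def using n lam G_ge h(1,2) by (rule assumption_A_hard_instance)
    fix \<eta> :: real
    assume "0 < \<eta>"
    then have "1/2 \<le> ig_iterate n f \<eta> 1 k \<or> G / (120 * lam * real k) \<le> ig_iterate n f \<eta> 1 k"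
      unfolding ig_iterate_def f_def ig_epoch_hard_instance[OF h(1) lam[THEN less_imp_neq, symmetric]]
      using lam G_ge h(3) k by (intro funpow_epoch_map_lower_bound) auto
    then show "1/28800 * min lam (G\<^sup>2 / (lam * (real k)\<^sup>2))
        \<le> avg_fun n f (ig_iterate n f \<eta> 1 k) - (INF x. avg_fun n f x)"
      using quadratic_gap_ge[OF lam A_ge k _ G] INF_quadratic[of A] A_ge lam by (simp add: F)
  qed
qed simp

end
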